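(* Let $X$ be a correlator of type $X_{-1}$ and let $W_1=x_1^{a_1}x_2+\dots+x_{N-1}^{a_{N-1}}x_N+x_N^{a_N}x_1$ be a loop summand with $K_{W_1}=1$. Then, after cyclically renumbering the variables of $W_1$, the sequence $(K_1,\dots,K_N)$ is a concatenation of blocks $(0)$ and $(-1,1)$ followed by exactly one of the blocks $(1)$, $(-1,2)$, $(-2,3)$. The block $(-2,3)$ can occur only if $a_{N-1}=2$, and in the cases $(-1,2)$ and $(-2,3)$ one has $\ell_{N-1}+\ell_N\le1$.
   Context: $W=\bigoplus_jW_j$ is an invertible polynomial written as a disjoint sum of atomic summands, $E_W$ its exponent matrix, $K_{W_1}=\sum_{i\in W_1}K_i$, loop indices taken mod $N$. A genus-zero correlator (B-model of $W^T$, or A-model of $(W,G_W)$ via Krawitz's map) is of type $X_{-1}$ if it has at least four insertions, has the form $\langle x_N,\dots,x_N,\dots,x_1,\dots,x_1,\alpha,\beta\rangle$ with $x_i$ appearing $\ell_i\ge0$ times and $\alpha=\prod x_i^{m_i}$, $\beta=\prod x_i^{n_i}$ monomials of the standard basis of $\mathrm{Jac}(W^T)$ (for a loop summand: exponents $0\le m_i,n_i\le a_i-1$), and, with $b=E_W^{-1}(\ell+m+n+2\cdot\mathbf 1)$ and $K_i=\ell_i-b_i+1$, satisfies $K_i\in\mathbb Z$ and $\sum_iK_i=1$. *)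

theory Defs
  imports Complex_Main
begin

end

theory Submission
  imports Defs
begin

text \<open>Substituting \<open>b\<^sub>i = \<ell>\<^sub>i + 1 - K\<^sub>i\<close> into the row of \<open>E\<^sub>W\<close> belonging to \<open>x\<^sub>i\<close> gives
  \<open>a\<^sub>i b\<^sub>i + b\<^sub>i\<^sub>+\<^sub>1 = \<ell>\<^sub>i + m\<^sub>i + n\<^sub>i + 2\<close>, and the bounds \<open>m\<^sub>i, n\<^sub>i \<le> a\<^sub>i - 1\<close> turn this into
  \<open>K\<^sub>i\<^sub>+\<^sub>1 \<ge> -2K\<^sub>i - 1\<close> whenever \<open>K\<^sub>i < 0\<close>. Hence the excess
  \<open>max K\<^sub>i\<^sub>+\<^sub>1 0 + min K\<^sub>i 0\<close> is a nonnegative integer; its cyclic sum telescopes to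
  \<open>K\<^sub>W\<^sub>1 = 1\<close>, so it equals 1 on exactly one edge \<open>(j, j+1)\<close> and 0 on all others. Excess 0
  means that a nonnegative value is followed by a nonpositive one and a negative value is \<open>-1\<close>
  followed by \<open>1\<close>, so reading the cycle from \<open>j + 2\<close> produces blocks \<open>(0)\<close> and \<open>(-1, 1)\<close>;
  excess 1 on \<open>(j, j+1)\<close> leaves \<open>(1)\<close>, \<open>(-1, 2)\<close> or \<open>(-2, 3)\<close> at the end, and for the
  last two the same row equation bounds \<open>\<ell>\<^sub>j + \<ell>\<^sub>j\<^sub>+\<^sub>1\<close> and forces \<open>a\<^sub>j = 2\<close> in the
  case \<open>(-2, 3)\<close>.\<close>

lemma loop_row_sum:
  fixes E :: "'v::finite \<Rightarrow> 'v \<Rightarrow> nat" and b :: "'v \<Rightarrow> 'a::comm_semiring_1"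
  assumes "u \<noteq> w" and "\<forall>v. E u v = (if v = u then A else if v = w then 1 else 0)"
  shows "(\<Sum>v\<in>UNIV. of_nat (E u v) * b v) = of_nat A * b u + b w"
proof -
  have "of_nat (E u v) * b v = (if v = u then of_nat A * b u else 0) + (if v = w then b w else 0)" for v
    using assms by auto
  then show ?thesis by (simp add: sum.distrib)
qed

lemma loop_edge_lower_bound:
  fixes E :: "'v::finite \<Rightarrow> 'v \<Rightarrow> nat" and b :: "'v \<Rightarrow> rat"
    and A L L' mm nn :: nat and G G' :: int
  assumes "u \<noteq> w" and row: "\<forall>v. E u v = (if v = u then A else if v = w then 1 else 0)"
    and "(\<Sum>v\<in>UNIV. of_nat (E u v) * b v) = of_nat (L + mm + nn + 2)"
    and "b u = of_nat L + 1 - of_int G" and "b w = of_nat L' + 1 - of_int G'"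
    and "mm \<le> A - 1" and "nn \<le> A - 1" and "1 \<le> A"
  shows "(int A - 1) * (int L - 1) + int L' \<le> G' + int A * G"
proof -
  have "rat_of_int (int A * (int L + 1 - G) + (int L' + 1 - G')) = rat_of_int (int (L + mm + nn + 2))"
    using assms(1,3-5) loop_row_sum[of u w E A b] row by simp
  then have "int A * (int L + 1 - G) + (int L' + 1 - G') = int (L + mm + nn + 2)"
    by (simp only: of_int_eq_iff)
  then have "G' + int A * G = (int A - 1) * (int L - 1) + int L' + (2 * (int A - 1) - int mm - int nn)"
    by (simp add: algebra_simps)
  moreover have "int mm \<le> int A - 1" and "int nn \<le> int A - 1"
    using assms(6-8) by linarith+
  ultimately show ?thesis by (smt (verit))
qed

lemma loop_edge_growth:
  fixes A L L' G G' :: int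
  assumes bound: "(A - 1) * (L - 1) + L' \<le> G' + A * G"
    and "2 \<le> A" and "0 \<le> L" and "0 \<le> L'" and "G < 0"
  shows "-2 * G - 1 \<le> G'"
proof -
  have "0 \<le> (A - 1) * L" using assms(2,3) by simp
  moreover have "2 * (-G - 1) \<le> A * (-G - 1)"
    using assms(2,5) by (intro mult_right_mono) simp_all
  ultimately show ?thesis using bound \<open>0 \<le> L'\<close> by (simp add: algebra_simps)
qed

lemma loop_edge_final_block:
  fixes A L L' G G' :: int
  assumes bound: "(A - 1) * (L - 1) + L' \<le> G' + A * G"
    and "2 \<le> A" and "0 \<le> L" and "0 \<le> L'" and "G < 0" and "G + G' = 1"
  shows "L + L' \<le> 1" and "G \<le> -2 \<Longrightarrow> A = 2"
proof -
  have key: "(A - 1) * (L - 1 - G) + L' \<le> 1"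
    using bound \<open>G + G' = 1\<close> by (simp add: algebra_simps)
  have "L - 1 - G \<le> (A - 1) * (L - 1 - G)"
    using assms(2-5) by (simp add: mult_right_mono[of 1 "A - 1", simplified])
  then show "L + L' \<le> 1" using key \<open>G < 0\<close> by linarith
  assume "G \<le> -2"
  then have "A - 1 \<le> (A - 1) * (L - 1 - G)"
    using assms(2,3) by (simp add: mult_left_mono[of 1 "L - 1 - G", simplified])
  then show "A = 2" using key assms(2,4) by linarith
qed

lemma loop_summand_edge_bound:
  fixes E :: "'v::finite \<Rightarrow> 'v \<Rightarrow> nat" and b :: "'v \<Rightarrow> rat" and l m n :: "'v \<Rightarrow> nat"
    and g :: "nat \<Rightarrow> int"
  assumes "2 \<le> N" and "inj_on x {..<N}" and "\<forall>i<N. 2 \<le> a i"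
    and loop_rows: "\<forall>i<N. \<forall>v. E (x i) v =
        (if v = x i then a i else if v = x (Suc i mod N) then 1 else 0)"
    and b_eq: "\<forall>v. (\<Sum>w\<in>UNIV. of_nat (E v w) * b w) = of_nat (l v + m v + n v + 2)"
    and "\<forall>i<N. m (x i) \<le> a i - 1 \<and> n (x i) \<le> a i - 1"
    and K_g: "\<And>i. of_nat (l (x (i mod N))) - b (x (i mod N)) + 1 = of_int (g i)"
  shows "(int (a (i mod N)) - 1) * (int (l (x (i mod N))) - 1) + int (l (x (Suc i mod N)))
      \<le> g (Suc i) + int (a (i mod N)) * g i"
proof (rule loop_edge_lower_bound[where E = E and b = b])
  have "i mod N < N" using \<open>2 \<le> N\<close> by simp
  then show "m (x (i mod N)) \<le> a (i mod N) - 1" "n (x (i mod N)) \<le> a (i mod N) - 1" "1 \<le> a (i mod N)"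
    using assms(3,6) by auto
  have "i mod N \<noteq> Suc i mod N"
    using \<open>2 \<le> N\<close> by (auto simp: mod_Suc)
  then show "x (i mod N) \<noteq> x (Suc i mod N)"
    using \<open>inj_on x {..<N}\<close> \<open>2 \<le> N\<close> by (simp add: inj_on_eq_iff)
  show "\<forall>v. E (x (i mod N)) v
      = (if v = x (i mod N) then a (i mod N) else if v = x (Suc i mod N) then 1 else 0)"
    using loop_rows \<open>2 \<le> N\<close> by (simp add: mod_Suc_eq)
  show "b (x (i mod N)) = of_nat (l (x (i mod N))) + 1 - of_int (g i)"
    "b (x (Suc i mod N)) = of_nat (l (x (Suc i mod N))) + 1 - of_int (g (Suc i))"
    using K_g[of i] K_g[of "Suc i"] by (simp_all add: algebra_simps)
qed (use b_eq in blast)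

definition block_step :: "int \<Rightarrow> int \<Rightarrow> bool" where
  "block_step u v \<longleftrightarrow> (0 \<le> u \<longrightarrow> v \<le> 0) \<and> (u < 0 \<longrightarrow> u = -1 \<and> v = 1)"

lemma concat_blocks_if_successively_block_step:
  fixes p :: int
  assumes "successively block_step (p # xs)" and "0 \<le> p" and "0 \<le> last (p # xs)"
  shows "\<exists>bs. set bs \<subseteq> {[0], [-1, 1]} \<and> xs = concat bs"
  using assms
proof (induction xs arbitrary: p rule: induct_list012)
  case 1
  then show ?case by (intro exI[of _ "[]"]) simp
next
  case (2 v)
  then show ?case by (intro exI[of _ "[[0]]"]) (simp add: block_step_def)
next
  case (3 v w zs)
  then have "v \<le> 0" by (simp add: block_step_def)
  show ?case
  proof (cases "v = 0")
    case True
    with "3.IH"(2)[of 0] "3.prems" obtain bs where "set bs \<subseteq> {[0], [-1, 1]}" "w # zs = concat bs"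
      by auto
    with True show ?thesis by (intro exI[of _ "[0] # bs"]) simp
  next
    case False
    with \<open>v \<le> 0\<close> "3.prems"(1) have "v = -1" "w = 1" by (simp_all add: block_step_def)
    with "3.IH"(1)[of 1] "3.prems" obtain bs where "set bs \<subseteq> {[0], [-1, 1]}" "zs = concat bs"
      by auto
    with \<open>v = -1\<close> \<open>w = 1\<close> show ?thesis by (intro exI[of _ "[-1, 1] # bs"]) simp
  qed
qed

definition excess :: "int \<Rightarrow> int \<Rightarrow> int" where
  "excess u v = max v 0 + min u 0"

lemma excess_nonneg: "(u < 0 \<longrightarrow> -2 * u - 1 \<le> v) \<Longrightarrow> 0 \<le> excess u v"
  by (auto simp: excess_def)

lemma block_step_if_excess_eq_0:
  "(u < 0 \<longrightarrow> -2 * u - 1 \<le> v) \<Longrightarrow> excess u v = 0 \<Longrightarrow> block_step u v"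
  by (auto simp: excess_def block_step_def)

lemma excess_eq_1_cases:
  "(u < 0 \<longrightarrow> -2 * u - 1 \<le> v) \<Longrightarrow> excess u v = 1 \<Longrightarrow>
    0 \<le> u \<and> v = 1 \<or> [u, v] \<in> {[-1, 2], [-2, 3]}"
  by (auto simp: excess_def)

lemma sum_excess_cycle:
  fixes g :: "nat \<Rightarrow> int"
  assumes "g N = g 0"
  shows "(\<Sum>i<N. excess (g i) (g (Suc i))) = (\<Sum>i<N. g i)"
proof -
  have "excess (g i) (g (Suc i)) = (max (g (Suc i)) 0 - max (g i) 0) + g i" for i
    by (simp add: excess_def)
  then have "(\<Sum>i<N. excess (g i) (g (Suc i)))
      = (\<Sum>i<N. max (g (Suc i)) 0 - max (g i) 0) + (\<Sum>i<N. g i)"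
    by (simp add: sum.distrib)
  also have "(\<Sum>i<N. max (g (Suc i)) 0 - max (g i) 0) = 0"
    using sum_lessThan_telescope[of "\<lambda>i. max (g i) 0" N] assms by simp
  finally show ?thesis by simp
qed

lemma nonneg_int_sum_eq_1:
  fixes f :: "'a \<Rightarrow> int"
  assumes "finite S" and nonneg: "\<forall>i\<in>S. 0 \<le> f i" and "sum f S = 1"
  shows "\<exists>j\<in>S. f j = 1 \<and> (\<forall>i\<in>S - {j}. f i = 0)"
proof -
  obtain j where j: "j \<in> S" "0 < f j"
    using assms sum_nonneg_eq_0_iff[of S f] by fastforce
  have split: "sum f S = f j + sum f (S - {j})"
    using \<open>finite S\<close> j(1) by (simp add: sum.remove)
  have "0 \<le> sum f (S - {j})" using nonneg by (intro sum_nonneg) auto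
  then have "f j = 1" and "sum f (S - {j}) = 0" using split j(2) \<open>sum f S = 1\<close> by linarith+
  then show ?thesis using j(1) \<open>finite S\<close> nonneg sum_nonneg_eq_0_iff[of "S - {j}" f] by auto
qed

lemma block_decomposition_of_cycle:
  fixes p :: int
  assumes steps: "successively block_step (p # ys)" and "ys \<noteq> []"
    and growth: "last ys < 0 \<longrightarrow> -2 * last ys - 1 \<le> p"
    and closing: "excess (last ys) p = 1"
  shows "\<exists>bs fin. set bs \<subseteq> {[0], [-1, 1]} \<and> fin \<in> {[1], [-1, 2], [-2, 3]} \<and>
    ys @ [p] = concat bs @ fin \<and> (fin \<noteq> [1] \<longrightarrow> fin = [last ys, p])"
proof -
  consider "0 \<le> last ys" "p = 1" | "[last ys, p] \<in> {[-1, 2], [-2, 3]}"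
    using excess_eq_1_cases[OF growth closing] by blast
  then show ?thesis
  proof cases
    case 1
    then have "last (p # ys) \<ge> 0" "0 \<le> p" using \<open>ys \<noteq> []\<close> by simp_all
    then obtain bs where "set bs \<subseteq> {[0], [-1, 1]}" "ys = concat bs"
      using concat_blocks_if_successively_block_step[OF steps] by blast
    with 1 show ?thesis by (intro exI[of _ bs] exI[of _ "[1]"]) simp
  next
    case 2
    define zs where "zs = butlast ys"
    have ys: "ys = zs @ [last ys]"
      using \<open>ys \<noteq> []\<close> unfolding zs_def by simp
    have "successively block_step ((p # zs) @ [last ys])"
      using steps ys by simp
    then have zs_steps: "successively block_step (p # zs)"
      and "block_step (last (p # zs)) (last ys)"
      by (simp_all only: successively_append_iff) simp_all
    then have "0 \<le> last (p # zs)" "0 \<le> p"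
      using 2 by (auto simp: block_step_def)
    then obtain bs where "set bs \<subseteq> {[0], [-1, 1]}" "zs = concat bs"
      using concat_blocks_if_successively_block_step[OF zs_steps] by blast
    with 2 ys show ?thesis by (intro exI[of _ bs] exI[of _ "[last ys, p]"]) auto
  qed
qed

lemma unique_excess_in_cycle:
  fixes g :: "nat \<Rightarrow> int"
  assumes "0 < N" and periodic: "\<And>i. g (i mod N) = g i"
    and growth: "\<And>i. g i < 0 \<longrightarrow> -2 * g i - 1 \<le> g (Suc i)"
    and sum: "(\<Sum>i<N. g i) = 1"
  obtains j where "j < N" and "excess (g j) (g (Suc j)) = 1"
    and "\<And>k. k mod N \<noteq> j \<Longrightarrow> block_step (g k) (g (Suc k))"
proof -
  have periodic_Suc: "g (Suc (i mod N)) = g (Suc i)" for i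
    by (metis mod_Suc_eq periodic)
  have "(\<Sum>i<N. excess (g i) (g (Suc i))) = 1"
    using sum_excess_cycle[of g N] periodic[of N] periodic[of 0] sum by simp
  then obtain j where "j < N" and closing: "excess (g j) (g (Suc j)) = 1"
    and balanced: "\<forall>i\<in>{..<N} - {j}. excess (g i) (g (Suc i)) = 0"
    using nonneg_int_sum_eq_1[of "{..<N}" "\<lambda>i. excess (g i) (g (Suc i))"] excess_nonneg[OF growth]
    by auto
  have "block_step (g k) (g (Suc k))" if "k mod N \<noteq> j" for k
  proof (rule block_step_if_excess_eq_0[OF growth])
    have "excess (g (k mod N)) (g (Suc (k mod N))) = 0"
      using balanced that \<open>0 < N\<close> by simp
    then show "excess (g k) (g (Suc k)) = 0" by (simp only: periodic periodic_Suc)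
  qed
  with \<open>j < N\<close> closing show thesis by (rule that)
qed

lemma cyclic_block_decomposition:
  fixes g :: "nat \<Rightarrow> int"
  assumes "2 \<le> N" and periodic: "\<And>i. g (i mod N) = g i"
    and growth: "\<And>i. g i < 0 \<longrightarrow> -2 * g i - 1 \<le> g (Suc i)"
    and sum: "(\<Sum>i<N. g i) = 1"
  shows "\<exists>r<N. \<exists>bs fin. set bs \<subseteq> {[0], [-1, 1]} \<and> fin \<in> {[1], [-1, 2], [-2, 3]} \<and>
    map (\<lambda>i. g (i + r)) [0..<N] = concat bs @ fin \<and>
    (fin \<noteq> [1] \<longrightarrow> fin = [g (N - 2 + r), g (N - 1 + r)])"
proof -
  obtain j where "j < N" and closing: "excess (g j) (g (Suc j)) = 1"
    and step: "\<And>k. k mod N \<noteq> j \<Longrightarrow> block_step (g k) (g (Suc k))"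
    using unique_excess_in_cycle[OF _ periodic growth sum] \<open>2 \<le> N\<close> by auto
  define r where "r = (j + 2) mod N"
  have shift: "g (i + r) = g (i + Suc (Suc j))" for i
    by (metis r_def add_2_eq_Suc' mod_add_right_eq periodic)
  have wrap: "g (N - 2 + r) = g j" "g (N - 1 + r) = g (Suc j)"
  proof -
    have periodic_add: "g (N + i) = g i" for i
      by (metis mod_add_self1 periodic)
    have "N - 2 + Suc (Suc j) = N + j" "N - 1 + Suc (Suc j) = N + Suc j"
      using \<open>2 \<le> N\<close> by simp_all
    then show "g (N - 2 + r) = g j" "g (N - 1 + r) = g (Suc j)"
      using shift[of "N - 2"] shift[of "N - 1"] by (simp_all only: periodic_add)
  qed
  define ys where "ys = map (\<lambda>i. g (i + r)) [0..<N - 1]"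
  have cycle: "g (Suc j) # ys = map (\<lambda>i. g (i + Suc j)) [0..<N]"
    using \<open>2 \<le> N\<close> map_upt_Suc[of "\<lambda>i. g (i + Suc j)" "N - 1"] by (simp add: ys_def shift)
  have "successively block_step (g (Suc j) # ys)"
    unfolding cycle successively_conv_nth
  proof (intro allI impI)
    fix i assume "Suc i < length (map (\<lambda>i. g (i + Suc j)) [0..<N])"
    moreover from this have "(i + Suc j) mod N \<noteq> j"
      using \<open>j < N\<close> by (cases "i + Suc j < N") (auto simp: le_mod_geq)
    ultimately show "block_step (map (\<lambda>i. g (i + Suc j)) [0..<N] ! i)
        (map (\<lambda>i. g (i + Suc j)) [0..<N] ! Suc i)"
      using step by simp
  qed
  moreover have "ys \<noteq> []" using \<open>2 \<le> N\<close> by (simp add: ys_def)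
  moreover have "last ys = g j"
    using \<open>2 \<le> N\<close> wrap(1) by (simp add: ys_def last_map numeral_2_eq_2)
  ultimately obtain bs fin where "set bs \<subseteq> {[0], [-1, 1]}" "fin \<in> {[1], [-1, 2], [-2, 3]}"
    "ys @ [g (Suc j)] = concat bs @ fin" "fin \<noteq> [1] \<longrightarrow> fin = [g j, g (Suc j)]"
    using block_decomposition_of_cycle[of "g (Suc j)" ys] growth closing by auto
  moreover have "map (\<lambda>i. g (i + r)) [0..<N] = ys @ [g (Suc j)]"
  proof -
    have "[0..<N] = [0..<N - 1] @ [N - 1]" using \<open>2 \<le> N\<close> by (cases N) auto
    then show ?thesis using wrap(2) by (simp add: ys_def)
  qed
  ultimately show ?thesis
    using \<open>2 \<le> N\<close> wrap by (intro exI[of _ r]) (auto simp: r_def)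
qed

theorem lemma6p15:
  fixes E :: "'v::finite \<Rightarrow> 'v \<Rightarrow> nat"
    and l m n :: "'v \<Rightarrow> nat"
    and b :: "'v \<Rightarrow> rat"
    and x :: "nat \<Rightarrow> 'v"
    and a :: "nat \<Rightarrow> nat"
    and N :: nat
  defines "K \<equiv> (\<lambda>i. of_nat (l i) - b i + 1)"
  assumes E_invertible: "\<forall>c::'v \<Rightarrow> rat. (\<forall>i. (\<Sum>j\<in>UNIV. of_nat (E i j) * c j) = 0) \<longrightarrow> c = (\<lambda>_. 0)"
    and b_eq: "\<forall>i. (\<Sum>j\<in>UNIV. of_nat (E i j) * b j) = of_nat (l i + m i + n i + 2)"
    and K_int: "\<forall>i. K i \<in> \<int>"
    and K_sum: "(\<Sum>i\<in>UNIV. K i) = 1"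
    and four_insertions: "(\<Sum>i\<in>UNIV. l i) + 2 \<ge> 4"
    and N_ge: "N \<ge> 2"
    and x_inj: "inj_on x {..<N}"
    and a_ge: "\<forall>i<N. a i \<ge> 2"
    and loop_rows: "\<forall>i<N. \<forall>v. E (x i) v =
        (if v = x i then a i else if v = x (Suc i mod N) then 1 else 0)"
    and block_cols: "\<forall>v. v \<notin> x ` {..<N} \<longrightarrow> (\<forall>i<N. E v (x i) = 0)"
    and basis_W1: "\<forall>i<N. m (x i) \<le> a i - 1 \<and> n (x i) \<le> a i - 1"
    and K_W1: "(\<Sum>i<N. K (x i)) = 1"
  shows "\<exists>r<N. \<exists>bs fin.
           set bs \<subseteq> {[0], [-1, 1]} \<and> fin \<in> {[1], [-1, 2], [-2, 3]} \<and>
           map (\<lambda>i. K (x ((i + r) mod N))) [0..<N] = concat bs @ fin \<and>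
           (fin = [-2, 3] \<longrightarrow> a ((N - 2 + r) mod N) = 2) \<and>
           (fin \<noteq> [1] \<longrightarrow> l (x ((N - 2 + r) mod N)) + l (x ((N - 1 + r) mod N)) \<le> 1)"
proof -
  define g where "g i = \<lfloor>K (x (i mod N))\<rfloor>" for i
  have K_g: "K (x (i mod N)) = of_int (g i)" for i
    using K_int unfolding g_def by (metis Ints_cases floor_of_int)
  have g_mod: "g (i mod N) = g i" for i
    by (simp add: g_def)
  have edge_bound: "(int (a (i mod N)) - 1) * (int (l (x (i mod N))) - 1) + int (l (x (Suc i mod N)))
      \<le> g (Suc i) + int (a (i mod N)) * g i" for i
    using loop_summand_edge_bound[OF N_ge x_inj a_ge loop_rows b_eq basis_W1] K_g
    by (simp add: K_def)
  have growth: "g i < 0 \<longrightarrow> -2 * g i - 1 \<le> g (Suc i)" for i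
    using loop_edge_growth[OF edge_bound[of i]] a_ge N_ge by simp
  have "rat_of_int (\<Sum>i<N. g i) = (\<Sum>i<N. K (x i))"
    unfolding of_int_sum by (intro sum.cong) (simp_all flip: K_g)
  then have "(\<Sum>i<N. g i) = 1"
    using K_W1 of_int_eq_1_iff by metis
  then obtain r bs fin where "r < N" and bs: "set bs \<subseteq> {[0], [-1, 1]}"
    and fin: "fin \<in> {[1], [-1, 2], [-2, 3]}"
    and rotation: "map (\<lambda>i. g (i + r)) [0..<N] = concat bs @ fin"
    and fin_edge: "fin \<noteq> [1] \<longrightarrow> fin = [g (N - 2 + r), g (N - 1 + r)]"
    using cyclic_block_decomposition[OF N_ge g_mod growth] by blast
  have final_edge: "l (x ((N - 2 + r) mod N)) + l (x ((N - 1 + r) mod N)) \<le> 1 \<and>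
      (fin = [-2, 3] \<longrightarrow> a ((N - 2 + r) mod N) = 2)" if "fin \<noteq> [1]"
  proof -
    have "Suc (N - 2 + r) = N - 1 + r" using N_ge by simp
    moreover have "g (N - 2 + r) < 0" "g (N - 2 + r) + g (N - 1 + r) = 1"
      "fin = [-2, 3] \<longrightarrow> g (N - 2 + r) \<le> -2"
      using fin fin_edge that N_ge by auto
    ultimately show ?thesis
      using loop_edge_final_block[OF edge_bound[of "N - 2 + r"]] a_ge N_ge by auto
  qed
  have "map (\<lambda>i. K (x ((i + r) mod N))) [0..<N] = concat (map (map of_int) bs) @ map of_int fin"
    using arg_cong[OF rotation, of "map rat_of_int"] by (simp add: K_g map_concat comp_def)
  then show ?thesis
    using \<open>r < N\<close> bs fin final_edge
    by (intro exI[of _ r] conjI exI[of _ "map (map of_int) bs"] exI[of _ "map of_int fin"]) auto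
qed

end
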